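(* Let $\mathbf{J}_n\in\mathbb{R}^{N\times N}$, $f_n\in\mathbb{R}^N$, $M\ge1$, $\mathcal{K}_M=\operatorname{span}\{f_n,\mathbf{J}_nf_n,\dots,\mathbf{J}_n^{M-1}f_n\}$, let $\mathbf{V}_{n;M}$ have orthonormal columns spanning $\mathcal{K}_M$, and let $\mathbf{A}_n=\mathbf{V}_{n;M}\mathbf{V}_{n;M}^T\mathbf{J}_n\mathbf{V}_{n;M}\mathbf{V}_{n;M}^T$. Let $t$ be any linear TW-tree with $k\le M$ vertices. Then the elementary differential of $t$ equals $\mathbf{J}_n^{k-1}f_n$, i.e. it coincides with the elementary differential of the linear tree with $k$ vertices all of which are meagre; in particular all linear TW-trees with $k\le M$ vertices have the same elementary differential, regardless of the colors of their vertices.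
   Context: A TW-tree is a rooted tree whose vertices are each colored either "meagre" or "fat", such that every end vertex (leaf) is meagre and every fat vertex has exactly one child. A tree is linear if every vertex has at most one child; a linear tree with $k$ vertices is thus a chain $v_1$ (root), $v_2,\dots,v_k$ (leaf), with $v_k$ meagre. Its elementary differential (evaluated with the matrix $\mathbf{A}_n$ representing fat vertices and the Jacobian $\mathbf{J}_n$ representing meagre non-leaf vertices) is $B_1B_2\cdots B_{k-1}f_n$, where $B_i=\mathbf{A}_n$ if $v_i$ is fat and $B_i=\mathbf{J}_n$ if $v_i$ is meagre. In the paper $\mathbf{J}_n=f_y(y_n)$ and $f_n=f(y_n)$ for an ODE $y'=f(y)$. *)

theory Defs
  imports "HOL-Analysis.Analysis"
begin

datatype colour = Meagre | Fat

text \<open>A linear TW-tree with k vertices is encoded by the list of colours of its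
  vertices v_1 (root), ..., v_k (leaf). It is a TW-tree iff it is nonempty and the
  leaf is meagre (every non-leaf vertex of a chain has exactly one child).\<close>
definition linear_TW_tree :: "colour list \<Rightarrow> bool" where
  "linear_TW_tree cs \<longleftrightarrow> cs \<noteq> [] \<and> last cs = Meagre"

definition vertex_matrix :: "colour \<Rightarrow> real^'n^'n \<Rightarrow> real^'n^'n \<Rightarrow> real^'n^'n" where
  "vertex_matrix c A J = (case c of Fat \<Rightarrow> A | Meagre \<Rightarrow> J)"

definition elem_diff_linear ::
  "colour list \<Rightarrow> real^'n^'n \<Rightarrow> real^'n^'n \<Rightarrow> real^'n \<Rightarrow> real^'n" where
  "elem_diff_linear cs A J f = foldr (\<lambda>c v. vertex_matrix c A J *v v) (butlast cs) f"

fun matpow :: "real^'n^'n \<Rightarrow> nat \<Rightarrow> real^'n^'n" where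
  "matpow J 0 = mat 1"
| "matpow J (Suc i) = J ** matpow J i"

end

theory Submission
  imports Defs
begin

text \<open>If \<open>P\<close> fixes the Krylov vectors \<open>f, J f, \<dots>, J\<^sup>M\<^sup>-\<^sup>1 f\<close>, then the compression
  \<open>P J P\<close> acts like \<open>J\<close> on all of them except the last one. Hence along a chain of at most
  \<open>M\<close> vertices it makes no difference whether a vertex contributes \<open>P J P\<close> (fat) or \<open>J\<close>
  (meagre). For \<open>P = V V\<^sup>T\<close> with orthonormal columns of \<open>V\<close> spanning the Krylov space,
  \<open>P\<close> is the orthogonal projection onto that space and so fixes every Krylov vector.\<close>

lemma matpow_Suc_mult_vector: "matpow J (Suc i) *v f = J *v (matpow J i *v f)"
  by (simp add: matrix_vector_mul_assoc)

lemma column_eq_mult_axis: "column i (V::real^'m^'n) = V *v axis i 1"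
  by (simp add: column_def matrix_vector_mult_def axis_def vec_eq_iff if_distrib cong: if_cong)

lemma orthonormal_columns_projection_fixes_span:
  fixes V :: "real^'m^'n"
  assumes VV: "transpose V ** V = mat 1" and x: "x \<in> span (columns V)"
  shows "(V ** transpose V) *v x = x"
proof -
  let ?Fix = "{x. (V ** transpose V) *v x = x}"
  have "(V ** transpose V) *v (V *v y) = V *v y" for y
    by (metis VV matrix_vector_mul_assoc matrix_mul_assoc matrix_mul_rid)
  then have "columns V \<subseteq> ?Fix"
    by (auto simp: columns_def column_eq_mult_axis)
  moreover have "subspace ?Fix"
    by (simp add: subspace_def matrix_vector_right_distrib matrix_vector_mult_scaleR)
  ultimately have "span (columns V) \<subseteq> ?Fix"
    by (rule span_minimal)
  then show ?thesis using x by auto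
qed

lemma compression_mult_krylov_vector:
  fixes P J :: "real^'n^'n"
  assumes fixes_krylov: "\<And>i. i < M \<Longrightarrow> P *v (matpow J i *v f) = matpow J i *v f"
    and "Suc i < M"
  shows "(P ** J ** P) *v (matpow J i *v f) = matpow J (Suc i) *v f"
  using fixes_krylov[of i] fixes_krylov[of "Suc i"] \<open>Suc i < M\<close>
  by (simp add: matrix_vector_mul_assoc[symmetric] matpow_Suc_mult_vector)

lemma foldr_vertex_matrix_krylov:
  fixes P J :: "real^'n^'n"
  assumes fixes_krylov: "\<And>i. i < M \<Longrightarrow> P *v (matpow J i *v f) = matpow J i *v f"
    and A: "A = P ** J ** P"
    and "length cs < M"
  shows "foldr (\<lambda>c v. vertex_matrix c A J *v v) cs f = matpow J (length cs) *v f"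
  using \<open>length cs < M\<close>
proof (induction cs)
  case Nil
  then show ?case by simp
next
  case (Cons c cs)
  have "vertex_matrix c A J *v (matpow J (length cs) *v f) = matpow J (Suc (length cs)) *v f"
    using compression_mult_krylov_vector[OF fixes_krylov, where i = "length cs"] Cons.prems A
    by (cases c) (auto simp: vertex_matrix_def matpow_Suc_mult_vector simp del: matpow.simps(2))
  with Cons show ?case by simp
qed

theorem lemma3p2:
  fixes J :: "real^'n^'n" and f :: "real^'n" and M :: nat
    and V :: "real^'m^'n" and A :: "real^'n^'n" and t :: "colour list"
  assumes "M \<ge> 1"
    and "transpose V ** V = mat 1"
    and "span (columns V) = span {matpow J i *v f | i. i < M}"
    and "A = V ** transpose V ** J ** V ** transpose V"
    and "linear_TW_tree t"
    and "length t \<le> M"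
  shows "elem_diff_linear t A J f = matpow J (length t - 1) *v f
       \<and> elem_diff_linear t A J f = elem_diff_linear (replicate (length t) Meagre) A J f"
proof -
  let ?P = "V ** transpose V"
  have fixes_krylov: "?P *v (matpow J i *v f) = matpow J i *v f" if "i < M" for i
    using that assms(3)
    by (intro orthonormal_columns_projection_fixes_span[OF assms(2)]) (auto intro: span_base)
  have A: "A = ?P ** J ** ?P"
    using assms(4) by (simp add: matrix_mul_assoc)
  have "length (butlast t) < M"
    using assms(5,6) by (cases t) (auto simp: linear_TW_tree_def)
  then have "elem_diff_linear cs A J f = matpow J (length t - 1) *v f"
    if "length cs = length t" for cs
    using that foldr_vertex_matrix_krylov[OF fixes_krylov A, where cs = "butlast cs"]
    by (simp add: elem_diff_linear_def)
  then show ?thesis by simp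
qed

end
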